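(* Let $\mathcal{A}$ and $\mathcal{B}$ be two stochastic CA with the same set of states $Q$ (and possibly different random alphabets) and explicit global functions $F$ and $G$. If $S_F=S_G$ then $S_F^t=S_G^t$ for all $t\ge1$.
   Context: A stochastic CA is $(Q,R,V,V',f)$ with $Q$ finite states, $R$ finite random symbols, $V=\{v_1,\dots,v_r\}$, $V'=\{v'_1,\dots,v'_{r'}\}$ finite subsets of $\mathbb{Z}$, $f:Q^r\times R^{r'}\to Q$; explicit global function $F(c,s)_z=f((c_{z+v_1},\dots,c_{z+v_r}),(s_{z+v'_1},\dots,s_{z+v'_{r'}}))$. Iterates: $F^0(c)=c$, $F^{t+1}(c,s^1,\dots,s^{t+1})=F(F^t(c,s^1,\dots,s^t),s^{t+1})$. $\nu_R$ is the uniform Bernoulli measure on $R^{\mathbb{Z}}$ and $\nu_{R^t}$ the uniform (product) measure on $(R^{\mathbb{Z}})^t$. For cylinders $[u]_z=\{c:c_{z+x}=u_x,0\le x<|u|\}$: $S_F(c)([u]_z)=\nu_R\{s:F(c,s)\in[u]_z\}$ and $S_F^t(c)([u]_z)=\nu_{R^t}\{(s^1,\dots,s^t): F^t(c,s^1,\dots,s^t)\in[u]_z\}$, which determine Borel probability measures on $Q^{\mathbb{Z}}$. *)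

theory Defs
  imports "HOL-Probability.Probability"
begin

text \<open>A stochastic CA (Q,R,V,V',f) is given by finite types 'q, 'r, neighbourhood
  lists V = [v_1,...,v_r], V' = [v'_1,...,v'_r'] and a local rule f, applied to
  the lists of neighbour states and neighbour random symbols.\<close>

definition globalF :: "int list \<Rightarrow> int list \<Rightarrow> ('q list \<Rightarrow> 'r list \<Rightarrow> 'q)
    \<Rightarrow> (int \<Rightarrow> 'q) \<Rightarrow> (int \<Rightarrow> 'r) \<Rightarrow> (int \<Rightarrow> 'q)" where
  "globalF V V' f c s = (\<lambda>z. f (map (\<lambda>v. c (z + v)) V) (map (\<lambda>v. s (z + v)) V'))"

definition bern :: "(int \<Rightarrow> 'r::finite) measure" where
  "bern = PiM (UNIV :: int set) (\<lambda>_. measure_pmf (pmf_of_set (UNIV :: 'r set)))"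

primrec iterF :: "((int \<Rightarrow> 'q) \<Rightarrow> (int \<Rightarrow> 'r) \<Rightarrow> (int \<Rightarrow> 'q)) \<Rightarrow> nat
    \<Rightarrow> (int \<Rightarrow> 'q) \<Rightarrow> (nat \<Rightarrow> int \<Rightarrow> 'r) \<Rightarrow> (int \<Rightarrow> 'q)" where
  "iterF F 0 c ss = c"
| "iterF F (Suc t) c ss = F (iterF F t c ss) (ss (Suc t))"

definition cyl :: "'q list \<Rightarrow> int \<Rightarrow> (int \<Rightarrow> 'q) set" where
  "cyl u z = {c. \<forall>x < length u. c (z + int x) = u ! x}"

definition SF :: "((int \<Rightarrow> 'q) \<Rightarrow> (int \<Rightarrow> 'r::finite) \<Rightarrow> (int \<Rightarrow> 'q))
    \<Rightarrow> (int \<Rightarrow> 'q) \<Rightarrow> (int \<Rightarrow> 'q) set \<Rightarrow> real" where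
  "SF F c A = measure bern {s \<in> space bern. F c s \<in> A}"

definition SFt :: "((int \<Rightarrow> 'q) \<Rightarrow> (int \<Rightarrow> 'r::finite) \<Rightarrow> (int \<Rightarrow> 'q)) \<Rightarrow> nat
    \<Rightarrow> (int \<Rightarrow> 'q) \<Rightarrow> (int \<Rightarrow> 'q) set \<Rightarrow> real" where
  "SFt F t c A = measure (PiM {1..t} (\<lambda>_. bern))
     {ss \<in> space (PiM {1..t} (\<lambda>_. (bern :: (int \<Rightarrow> 'r) measure))). iterF F t c ss \<in> A}"

end

theory Submission
  imports Defs
begin

text \<open>Integrating out the last random field first, \<open>S\<^sup>t\<^sup>+\<^sup>1(c)[u]\<^sub>z\<close> is the expectation of
  \<open>S\<^sub>F(F\<^sup>t(c))[u]\<^sub>z\<close>. Since \<open>F\<close> has finite radius \<open>m\<close>, \<open>S\<^sub>F(d)[u]\<^sub>z\<close> depends only on the word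
  \<open>w\<close> that \<open>d\<close> shows on \<open>[z - m, z + |u| + m)\<close>, whence
  \<open>S\<^sup>t\<^sup>+\<^sup>1(c)[u]\<^sub>z = \<Sum>\<^sub>w S\<^sub>F(d\<^sub>w)[u]\<^sub>z \<cdot> S\<^sup>t(c)[w]\<^sub>z\<^sub>-\<^sub>m\<close> for any \<open>d\<^sub>w\<close> showing \<open>w\<close> there.
  The coefficients are values of \<open>S\<^sub>F = S\<^sub>G\<close> on cylinders, so the same expansion holds for \<open>G\<close>,
  and induction on \<open>t\<close> gives \<open>S\<^sub>F\<^sup>t = S\<^sub>G\<^sup>t\<close>.\<close>

definition window :: "int \<Rightarrow> nat \<Rightarrow> (int \<Rightarrow> 'q) \<Rightarrow> 'q list" where
  "window a n d = map (\<lambda>k. d (a + int k)) [0..<n]"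

text \<open>Outside \<open>[a, a + length w)\<close> the values are junk.\<close>
definition extend_window :: "int \<Rightarrow> 'q list \<Rightarrow> int \<Rightarrow> 'q" where
  "extend_window a w p = w ! nat (p - a)"

definition radius :: "int list \<Rightarrow> int" where
  "radius V = Max (insert 0 (abs ` set V))"

lemma window_extend_window [simp]: "window a (length w) (extend_window a w) = w"
  by (rule nth_equalityI) (simp_all add: window_def extend_window_def)

lemma length_window [simp]: "length (window a n d) = n"
  by (simp add: window_def)

lemma abs_le_radius: "v \<in> set V \<Longrightarrow> \<bar>v\<bar> \<le> radius V"
  by (simp add: radius_def)

lemma mem_cyl_iff_window: "c \<in> cyl u z \<longleftrightarrow> window z (length u) c = u"
  unfolding cyl_def window_def list_eq_iff_nth_eq by simp

lemma iterF_fun_upd_beyond: "t < k \<Longrightarrow> iterF F t c (ss(k := y)) = iterF F t c ss"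
  by (induction t) auto

lemma prob_space_bern: "prob_space (bern :: (int \<Rightarrow> 'r::finite) measure)"
  unfolding bern_def by (rule prob_space_PiM) (simp add: prob_space_measure_pmf)

lemma space_bern [simp]: "space (bern :: (int \<Rightarrow> 'r::finite) measure) = UNIV"
  unfolding bern_def by (simp add: space_PiM)

lemma measurable_bern_component:
  "(\<lambda>s. s x) \<in> measurable (bern :: (int \<Rightarrow> 'r::finite) measure) (count_space UNIV)"
proof -
  have "(\<lambda>s. s x) \<in> measurable (bern :: (int \<Rightarrow> 'r) measure) (measure_pmf (pmf_of_set UNIV))"
    unfolding bern_def by (rule measurable_component_singleton) simp
  then show ?thesis by (simp add: measurable_cong_sets[OF refl sets_measure_pmf_count_space])
qed

lemma measurable_PiM_bern_component:
  assumes "k \<in> I"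
  shows "(\<lambda>ss. ss k x) \<in> measurable (PiM I (\<lambda>_. (bern :: (int \<Rightarrow> 'r::finite) measure))) (count_space UNIV)"
  using measurable_comp[OF measurable_component_singleton[OF assms] measurable_bern_component]
  by (simp add: o_def)

lemma measurable_map_components:
  assumes "\<And>x. (\<lambda>\<omega>. C \<omega> x) \<in> measurable M (count_space (UNIV :: 'q::countable set))"
  shows "(\<lambda>\<omega>. map (\<lambda>k. C \<omega> (p k)) xs) \<in> measurable M (count_space UNIV)"
proof (induction xs)
  case Nil
  then show ?case by simp
next
  case (Cons a xs)
  have "(\<lambda>\<omega>. (\<lambda>h. (\<lambda>l. h # l) (map (\<lambda>k. C \<omega> (p k)) xs)) (C \<omega> (p a))) \<in> measurable M (count_space UNIV)"
    by (rule measurable_compose_countable[OF _ assms],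
        rule measurable_compose_countable[OF _ Cons.IH]) simp
  then show ?case by simp
qed

lemma measurable_globalF:
  assumes "\<And>x. (\<lambda>\<omega>. C \<omega> x) \<in> measurable M (count_space (UNIV :: 'q::countable set))"
    and "\<And>x. (\<lambda>\<omega>. S \<omega> x) \<in> measurable M (count_space (UNIV :: 'r::countable set))"
  shows "(\<lambda>\<omega>. globalF V V' f (C \<omega>) (S \<omega>) x) \<in> measurable M (count_space UNIV)"
proof -
  have "(\<lambda>\<omega>. (\<lambda>a. (\<lambda>b. f a b) (map (\<lambda>v. S \<omega> (x + v)) V')) (map (\<lambda>v. C \<omega> (x + v)) V))
      \<in> measurable M (count_space UNIV)"
    by (rule measurable_compose_countable[OF _ measurable_map_components[OF assms(1)]],
        rule measurable_compose_countable[OF _ measurable_map_components[OF assms(2)]]) simp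
  then show ?thesis by (simp add: globalF_def)
qed

lemma measurable_iterF_globalF:
  "t \<le> T \<Longrightarrow> (\<lambda>ss. iterF (globalF V V' f) t c ss x)
     \<in> measurable (PiM {1..T} (\<lambda>_. (bern :: (int \<Rightarrow> 'r::finite) measure))) (count_space (UNIV :: 'q::finite set))"
proof (induction t arbitrary: x)
  case 0
  then show ?case by simp
next
  case (Suc t)
  have "(\<lambda>ss. globalF V V' f (iterF (globalF V V' f) t c ss) (ss (Suc t)) x)
      \<in> measurable (PiM {1..T} (\<lambda>_. bern)) (count_space UNIV)"
    using Suc by (intro measurable_globalF measurable_PiM_bern_component) auto
  then show ?case by simp
qed

lemma sets_vimage_cyl:
  assumes "\<And>x. (\<lambda>\<omega>. C \<omega> x) \<in> measurable M (count_space (UNIV :: 'q::countable set))"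
  shows "{\<omega> \<in> space M. C \<omega> \<in> cyl u z} \<in> sets M"
proof -
  have "{\<omega> \<in> space M. C \<omega> \<in> cyl u z} = (\<lambda>\<omega>. window z (length u) (C \<omega>)) -` {u} \<inter> space M"
    by (auto simp: mem_cyl_iff_window)
  also have "\<dots> \<in> sets M"
    unfolding window_def by (rule measurable_sets[OF measurable_map_components[OF assms]]) simp
  finally show ?thesis .
qed

lemma SF_globalF_cyl_local:
  assumes "window (z - radius V) (length u + 2 * nat (radius V)) d
         = window (z - radius V) (length u + 2 * nat (radius V)) d'"
  shows "SF (globalF V V' f) d (cyl u z) = SF (globalF V V' f) d' (cyl u z)"
proof -
  have agree: "d (z + int x + v) = d' (z + int x + v)" if "x < length u" "v \<in> set V" for x v
  proof -
    let ?m = "radius V"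
    have "\<bar>v\<bar> \<le> ?m" using abs_le_radius[OF that(2)] .
    then have "nat (x + v + ?m) < length u + 2 * nat ?m"
      using that(1) by linarith
    with assms have "d (z - ?m + int (nat (x + v + ?m))) = d' (z - ?m + int (nat (x + v + ?m)))"
      unfolding window_def list_eq_iff_nth_eq by auto
    moreover have "z - ?m + int (nat (x + v + ?m)) = z + int x + v"
      using \<open>\<bar>v\<bar> \<le> ?m\<close> by simp
    ultimately show ?thesis by argo
  qed
  have eq: "map (\<lambda>v. d (z + int x + v)) V = map (\<lambda>v. d' (z + int x + v)) V"
    if "x < length u" for x
    using agree that by simp
  have "globalF V V' f d s \<in> cyl u z \<longleftrightarrow> globalF V V' f d' s \<in> cyl u z" for s
    unfolding cyl_def globalF_def by (auto simp del: map_eq_conv simp add: eq)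
  then show ?thesis unfolding SF_def by simp
qed

lemma prob_space_PiM_bern: "prob_space (PiM I (\<lambda>_. (bern :: (int \<Rightarrow> 'r::finite) measure)))"
  by (rule prob_space_PiM) (rule prob_space_bern)

lemma SFt_0: "SFt (F :: _ \<Rightarrow> (int \<Rightarrow> 'r::finite) \<Rightarrow> _) 0 c A = (if c \<in> A then 1 else 0)"
  using prob_space_PiM_bern[where I = "{} :: nat set" and 'r = 'r]
  unfolding SFt_def by (cases "c \<in> A") (simp_all add: prob_space.prob_space)

lemma SFt_Suc_eq_nn_integral_SF:
  fixes V V' :: "int list" and f :: "'q::finite list \<Rightarrow> 'r::finite list \<Rightarrow> 'q"
  defines "F \<equiv> globalF V V' f"
  shows "ennreal (SFt F (Suc t) c (cyl u z))
    = (\<integral>\<^sup>+ ss. ennreal (SF F (iterF F t c ss) (cyl u z)) \<partial>PiM {1..t} (\<lambda>_. bern))"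
proof -
  let ?P = "\<lambda>T. PiM {1..T} (\<lambda>_. (bern :: (int \<Rightarrow> 'r) measure))"
  interpret product_prob_space "\<lambda>_::nat. bern :: (int \<Rightarrow> 'r) measure" UNIV
    by (simp add: product_prob_space_def product_sigma_finite_def prob_space_bern
        prob_space_imp_sigma_finite product_prob_space_axioms_def)
  define E where "E = {ss \<in> space (?P (Suc t)). iterF F (Suc t) c ss \<in> cyl u z}"
  have E: "E \<in> sets (?P (Suc t))"
    unfolding E_def F_def by (intro sets_vimage_cyl measurable_iterF_globalF) simp
  have insert_Suc: "{1..Suc t} = insert (Suc t) {1..t}" by auto
  have section_E: "(\<integral>\<^sup>+ y. indicator E (ss(Suc t := y)) \<partial>bern)
      = ennreal (SF F (iterF F t c ss) (cyl u z))" if ss: "ss \<in> space (?P t)" for ss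
  proof -
    let ?B = "{s \<in> space bern. F (iterF F t c ss) s \<in> cyl u z}"
    have "ss(Suc t := y) \<in> space (?P (Suc t))" for y
      using ss by (auto simp: space_PiM PiE_iff extensional_def)
    then have section_indicator: "indicator E (ss(Suc t := y)) = indicator ?B y" for y
      by (simp add: E_def indicator_def iterF_fun_upd_beyond)
    have "(\<integral>\<^sup>+ y. indicator E (ss(Suc t := y)) \<partial>bern) = (\<integral>\<^sup>+ y. indicator ?B y \<partial>bern)"
      by (rule nn_integral_cong) (rule section_indicator)
    also have "\<dots> = emeasure bern ?B"
      unfolding F_def by (intro nn_integral_indicator sets_vimage_cyl measurable_globalF
          measurable_bern_component) simp
    finally have "(\<integral>\<^sup>+ y. indicator E (ss(Suc t := y)) \<partial>bern) = emeasure bern ?B" .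
    then show ?thesis
      by (simp add: SF_def finite_measure.emeasure_eq_measure[OF prob_space.finite_measure[OF prob_space_bern]])
  qed
  have "ennreal (SFt F (Suc t) c (cyl u z)) = emeasure (?P (Suc t)) E"
    by (simp add: SFt_def E_def finite_measure.emeasure_eq_measure[OF prob_space.finite_measure[OF prob_space_PiM_bern]])
  also have "\<dots> = (\<integral>\<^sup>+ ss. indicator E ss \<partial>?P (Suc t))"
    using E by simp
  also have "\<dots> = (\<integral>\<^sup>+ ss. (\<integral>\<^sup>+ y. indicator E (ss(Suc t := y)) \<partial>bern) \<partial>?P t)"
  proof -
    have "indicator E \<in> borel_measurable (PiM (insert (Suc t) {1..t}) (\<lambda>_. bern))"
      using E unfolding insert_Suc by (rule borel_measurable_indicator)
    from product_nn_integral_insert[OF _ _ this] show ?thesis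
      by (simp only: insert_Suc) simp
  qed
  also have "\<dots> = (\<integral>\<^sup>+ ss. ennreal (SF F (iterF F t c ss) (cyl u z)) \<partial>?P t)"
    by (rule nn_integral_cong) (rule section_E)
  finally show ?thesis .
qed

lemma nn_integral_window_iterF:
  fixes V V' :: "int list" and f :: "'q::finite list \<Rightarrow> 'r::finite list \<Rightarrow> 'q"
    and \<phi> :: "'q list \<Rightarrow> real"
  defines "F \<equiv> globalF V V' f"
  assumes \<phi>_nonneg: "\<And>w. 0 \<le> \<phi> w"
  shows "(\<integral>\<^sup>+ ss. ennreal (\<phi> (window a n (iterF F t c ss))) \<partial>PiM {1..t} (\<lambda>_. (bern :: (int \<Rightarrow> 'r) measure)))
    = ennreal (\<Sum>w | length w = n. \<phi> w * SFt F t c (cyl w a))"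
proof -
  let ?P = "PiM {1..t} (\<lambda>_. (bern :: (int \<Rightarrow> 'r) measure))"
  let ?W = "{w::'q list. length w = n}"
  define A where "A w = {ss \<in> space ?P. iterF F t c ss \<in> cyl w a}" for w
  have A: "A w \<in> sets ?P" for w
    unfolding A_def F_def by (intro sets_vimage_cyl measurable_iterF_globalF) simp
  have finite_W: "finite ?W"
    using finite_lists_length_eq[of "UNIV :: 'q set" n] by simp
  have indicator_sum: "ennreal (\<phi> (window a n (iterF F t c ss)))
      = (\<Sum>w\<in>?W. ennreal (\<phi> w) * indicator (A w) ss)" if ss: "ss \<in> space ?P" for ss
  proof -
    let ?w0 = "window a n (iterF F t c ss)"
    have "ss \<in> A w \<longleftrightarrow> w = ?w0" if "w \<in> ?W" for w
      using ss that by (auto simp: A_def mem_cyl_iff_window)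
    then have "(\<Sum>w\<in>?W. ennreal (\<phi> w) * indicator (A w) ss)
        = (\<Sum>w\<in>?W. if w = ?w0 then ennreal (\<phi> w) else 0)"
      by (intro sum.cong) (auto simp: indicator_def)
    also have "\<dots> = ennreal (\<phi> ?w0)"
      using finite_W by (simp add: sum.delta)
    finally show ?thesis by simp
  qed
  have "(\<integral>\<^sup>+ ss. ennreal (\<phi> (window a n (iterF F t c ss))) \<partial>?P)
      = (\<integral>\<^sup>+ ss. (\<Sum>w\<in>?W. ennreal (\<phi> w) * indicator (A w) ss) \<partial>?P)"
    by (rule nn_integral_cong) (rule indicator_sum)
  also have "\<dots> = (\<Sum>w\<in>?W. ennreal (\<phi> w) * emeasure ?P (A w))"
    using A by (simp add: nn_integral_sum nn_integral_cmult_indicator)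
  also have "\<dots> = (\<Sum>w\<in>?W. ennreal (\<phi> w * SFt F t c (cyl w a)))"
    by (simp add: A_def SFt_def ennreal_mult \<phi>_nonneg
        finite_measure.emeasure_eq_measure[OF prob_space.finite_measure[OF prob_space_PiM_bern]])
  also have "\<dots> = ennreal (\<Sum>w\<in>?W. \<phi> w * SFt F t c (cyl w a))"
    by (rule sum_ennreal) (simp add: \<phi>_nonneg SFt_def)
  finally show ?thesis .
qed

lemma SFt_Suc_cyl_eq_sum:
  fixes V V' :: "int list" and f :: "'q::finite list \<Rightarrow> 'r::finite list \<Rightarrow> 'q"
    and \<phi> :: "'q list \<Rightarrow> real"
  defines "F \<equiv> globalF V V' f"
  assumes SF_window: "\<And>d. SF F d (cyl u z) = \<phi> (window a n d)"
    and \<phi>_nonneg: "\<And>w. 0 \<le> \<phi> w"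
  shows "SFt F (Suc t) c (cyl u z) = (\<Sum>w | length w = n. \<phi> w * SFt F t c (cyl w a))"
proof -
  have "ennreal (SFt F (Suc t) c (cyl u z))
      = (\<integral>\<^sup>+ ss. ennreal (\<phi> (window a n (iterF F t c ss))) \<partial>PiM {1..t} (\<lambda>_. (bern :: (int \<Rightarrow> 'r) measure)))"
    unfolding F_def SFt_Suc_eq_nn_integral_SF by (simp add: SF_window[unfolded F_def])
  also have "\<dots> = ennreal (\<Sum>w | length w = n. \<phi> w * SFt F t c (cyl w a))"
    unfolding F_def by (rule nn_integral_window_iterF) (rule \<phi>_nonneg)
  finally show ?thesis
    by (subst (asm) ennreal_inj) (auto intro!: sum_nonneg mult_nonneg_nonneg \<phi>_nonneg simp: SFt_def)
qed

lemma SF_globalF_cyl_eq_SF_extend_window: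
  assumes "a = z - radius V" and "n = length u + 2 * nat (radius V)"
  shows "SF (globalF V V' f) d (cyl u z) = SF (globalF V V' f) (extend_window a (window a n d)) (cyl u z)"
proof -
  have "window a n (extend_window a (window a n d)) = window a n d"
    using window_extend_window[of a "window a n d"] by simp
  then show ?thesis
    unfolding assms by (rule SF_globalF_cyl_local[symmetric])
qed

lemma SFt_Suc_cyl_eq_if_SF_eq:
  fixes f :: "'q::finite list \<Rightarrow> 'r::finite list \<Rightarrow> 'q"
    and g :: "'q list \<Rightarrow> 'r2::finite list \<Rightarrow> 'q"
  assumes SF_eq: "\<And>c u z. SF (globalF V V' f) c (cyl u z) = SF (globalF W W' g) c (cyl u z)"
    and SFt_eq: "\<And>c u z. SFt (globalF V V' f) t c (cyl u z) = SFt (globalF W W' g) t c (cyl u z)"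
  shows "SFt (globalF V V' f) (Suc t) c (cyl u z) = SFt (globalF W W' g) (Suc t) c (cyl u z)"
proof -
  define a where "a = z - radius V"
  define n where "n = length u + 2 * nat (radius V)"
  define \<phi> where "\<phi> w = SF (globalF V V' f) (extend_window a w) (cyl u z)" for w
  have SF_F: "SF (globalF V V' f) d (cyl u z) = \<phi> (window a n d)" for d
    unfolding \<phi>_def by (rule SF_globalF_cyl_eq_SF_extend_window[OF a_def n_def])
  have SF_G: "SF (globalF W W' g) d (cyl u z) = \<phi> (window a n d)" for d
    using SF_F SF_eq by metis
  have \<phi>_nonneg: "0 \<le> \<phi> w" for w
    by (simp add: \<phi>_def SF_def)
  show ?thesis
    by (simp add: SFt_Suc_cyl_eq_sum[OF SF_F \<phi>_nonneg] SFt_Suc_cyl_eq_sum[OF SF_G \<phi>_nonneg] SFt_eq)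
qed

theorem fact1:
  fixes V V' W W' :: "int list"
    and f :: "'q::finite list \<Rightarrow> 'r::finite list \<Rightarrow> 'q"
    and g :: "'q list \<Rightarrow> 'r2::finite list \<Rightarrow> 'q"
  assumes "\<forall>c u z. SF (globalF V V' f) c (cyl u z) = SF (globalF W W' g) c (cyl u z)"
  shows "\<forall>t\<ge>1. \<forall>c u z. SFt (globalF V V' f) t c (cyl u z) = SFt (globalF W W' g) t c (cyl u z)"
proof -
  have "\<forall>c u z. SFt (globalF V V' f) t c (cyl u z) = SFt (globalF W W' g) t c (cyl u z)" for t
  proof (induction t)
    case 0
    show ?case by (simp add: SFt_0)
  next
    case (Suc t)
    show ?case
      using SFt_Suc_cyl_eq_if_SF_eq[of V V' f W W' g t] assms Suc.IH by blast
  qed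
  then show ?thesis by blast
qed

end
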